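(* For every $n\ge1$ and every choice of coefficients, there exist real constants $\tau_{i,j},\sigma_{i,j}$ ($0\le i+j\le n$), depending on the coefficients, and a real polynomial $\phi$ of degree at most $2n+\frac{3+(-1)^n}{2}$ such that for all $h\in(0,+\infty)$, $$M(h)=\sum_{0\le i+j\le n}\tau_{i,j}I_{i,j}(h)+\sum_{0\le i+j\le n}\sigma_{i,j}J_{i,j}(h)+\phi\big(u(h)\big).$$
   Context: Fix an integer $n\ge 1$ and real coefficients $a^k_{i,j},b^k_{i,j}$ ($k=1,2,3,4$; $i+j\le n$), $f_k=\sum_{0\le i+j\le n}a^k_{i,j}x^iy^j$, $g_k=\sum_{0\le i+j\le n}b^k_{i,j}x^iy^j$. For $h>0$ let $u(h)=\sqrt{(\sqrt{1+4h}-1)/2}$ (so $u^4+u^2=h$), $\Gamma_h$ the circle $x^2+y^2=h$, and $A=(u,u^2)$, $B=(u,-u^2)$, $C=(-u,-u^2)$, $D=(-u,u^2)$. Let $\widehat{AB},\widehat{BC},\widehat{CD},\widehat{DA}$ be the arcs of $\Gamma_h$ traversed clockwise from $A$ to $B$ (through $(\sqrt h,0)$), $B$ to $C$ (through $(0,-\sqrt h)$), $C$ to $D$ (through $(-\sqrt h,0)$), $D$ to $A$ (through $(0,\sqrt h)$). Define $$M(h)=\int_{\widehat{AB}}g_1dx-f_1dy+\int_{\widehat{BC}}g_2dx-f_2dy+\int_{\widehat{CD}}g_3dx-f_3dy+\int_{\widehat{DA}}g_4dx-f_4dy,$$ the first order Melnikov function of the system $\dot x=y+\varepsilon f_k,\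 \dot y=-x+\varepsilon g_k$ on the regions $R_1=\{x>0,-x^2<y<x^2\}$, $R_2=\{y<-x^2\}$, $R_3=\{x<0,-x^2<y<x^2\}$, $R_4=\{y>x^2\}$. For integers $i,j\ge0$, $I_{i,j}(h)=\int_{\widehat{AB}}x^iy^jdx$ and $J_{i,j}(h)=\int_{\widehat{BC}}x^iy^jdx$. *)

theory Defs
  imports "HOL-Analysis.Analysis" "HOL-Computational_Algebra.Polynomial"
begin

definition bipoly :: "nat \<Rightarrow> (nat \<Rightarrow> nat \<Rightarrow> real) \<Rightarrow> real \<Rightarrow> real \<Rightarrow> real" where
  "bipoly n c x y = (\<Sum>i\<le>n. \<Sum>j\<le>n - i. c i j * x ^ i * y ^ j)"

text \<open>u(h) = sqrt((sqrt(1+4h)-1)/2), so that u^4+u^2 = h.\<close>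
definition uu :: "real \<Rightarrow> real" where
  "uu h = sqrt ((sqrt (1 + 4 * h) - 1) / 2)"

text \<open>Line integral of P dx + Q dy along the arc of the circle x^2+y^2=h
  parametrised by (sqrt h cos t, sqrt h sin t), traversed clockwise, i.e. with t
  decreasing from t0 to t1 (t1 \<le> t0).\<close>
definition cw_arc_int ::
  "(real \<Rightarrow> real \<Rightarrow> real) \<Rightarrow> (real \<Rightarrow> real \<Rightarrow> real) \<Rightarrow> real \<Rightarrow> real \<Rightarrow> real \<Rightarrow> real" where
  "cw_arc_int P Q h t0 t1 =
     - integral {t1..t0} (\<lambda>t. P (sqrt h * cos t) (sqrt h * sin t) * (- sqrt h * sin t)
                              + Q (sqrt h * cos t) (sqrt h * sin t) * (sqrt h * cos t))"

text \<open>Angle of A = (u,u^2) on the circle: arctan(u^2/u) = arctan u.\<close>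
definition angA :: "real \<Rightarrow> real" where
  "angA h = arctan (uu h)"

definition arcAB where "arcAB P Q h = cw_arc_int P Q h (angA h) (- angA h)"
definition arcBC where "arcBC P Q h = cw_arc_int P Q h (- angA h) (- pi + angA h)"
definition arcCD where "arcCD P Q h = cw_arc_int P Q h (pi + angA h) (pi - angA h)"
definition arcDA where "arcDA P Q h = cw_arc_int P Q h (pi - angA h) (angA h)"

text \<open>First order Melnikov function; a k, b k are the coefficient functions of f_k, g_k.\<close>
definition melnikov ::
  "nat \<Rightarrow> (nat \<Rightarrow> nat \<Rightarrow> nat \<Rightarrow> real) \<Rightarrow> (nat \<Rightarrow> nat \<Rightarrow> nat \<Rightarrow> real) \<Rightarrow> real \<Rightarrow> real" where
  "melnikov n a b h =
      arcAB (bipoly n (b 1)) (\<lambda>x y. - bipoly n (a 1) x y) h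
    + arcBC (bipoly n (b 2)) (\<lambda>x y. - bipoly n (a 2) x y) h
    + arcCD (bipoly n (b 3)) (\<lambda>x y. - bipoly n (a 3) x y) h
    + arcDA (bipoly n (b 4)) (\<lambda>x y. - bipoly n (a 4) x y) h"

definition Iint :: "nat \<Rightarrow> nat \<Rightarrow> real \<Rightarrow> real" where
  "Iint i j h = arcAB (\<lambda>x y. x ^ i * y ^ j) (\<lambda>x y. 0) h"

definition Jint :: "nat \<Rightarrow> nat \<Rightarrow> real \<Rightarrow> real" where
  "Jint i j h = arcBC (\<lambda>x y. x ^ i * y ^ j) (\<lambda>x y. 0) h"

end

theory Submission
  imports Defs
begin

text \<open>Expanding f_k and g_k, M(h) is a linear combination of the integrals of x^i y^j dx and
  x^i y^j dy over the four arcs. The rotation (x, y) \<mapsto> (-x, -y) carries CD onto AB and DA onto BC,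
  so only AB and BC matter, and there the dx-integrals are I_{i,j} and J_{i,j}. Integrating
  d(x^i y^(j+1)) = i x^(i-1) y^(j+1) dx + (j+1) x^i y^j dy along an arc turns every dy-integral
  into a dx-integral of the same total degree plus a boundary term. The arcs end at the points
  (\<plusminus>u, \<plusminus>u^2), so the boundary term is a multiple of u^(i+2j+2), and by parity it vanishes
  unless i + 2j + 2 \<le> 2n + (3 + (-1)^n)/2.\<close>

definition deg_bound :: "nat \<Rightarrow> nat" where
  "deg_bound n = (if even n then 2 * n + 2 else 2 * n + 1)"

lemma deg_bound_real: "real k \<le> 2 * real n + (3 + (-1) ^ n) / 2 \<longleftrightarrow> k \<le> deg_bound n"
  unfolding deg_bound_def by (cases "even n") auto

definition IJ_representable :: "nat \<Rightarrow> (real \<Rightarrow> real) \<Rightarrow> bool" where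
  "IJ_representable n f \<longleftrightarrow> (\<exists>\<tau> \<sigma> \<phi>. degree \<phi> \<le> deg_bound n \<and>
     (\<forall>h>0. f h = (\<Sum>i\<le>n. \<Sum>j\<le>n - i. \<tau> i j * Iint i j h)
                 + (\<Sum>i\<le>n. \<Sum>j\<le>n - i. \<sigma> i j * Jint i j h) + poly \<phi> (uu h)))"

lemma IJ_representable_cong:
  "IJ_representable n g \<Longrightarrow> (\<And>h. h > 0 \<Longrightarrow> f h = g h) \<Longrightarrow> IJ_representable n f"
  unfolding IJ_representable_def by simp

lemma IJ_representable_add:
  assumes "IJ_representable n f" "IJ_representable n g"
  shows "IJ_representable n (\<lambda>h. f h + g h)"
proof -
  obtain \<tau>1 \<sigma>1 \<phi>1 where f_repr: "degree \<phi>1 \<le> deg_bound n"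
    "\<forall>h>0. f h = (\<Sum>i\<le>n. \<Sum>j\<le>n - i. \<tau>1 i j * Iint i j h)
              + (\<Sum>i\<le>n. \<Sum>j\<le>n - i. \<sigma>1 i j * Jint i j h) + poly \<phi>1 (uu h)"
    using assms(1) unfolding IJ_representable_def by blast
  obtain \<tau>2 \<sigma>2 \<phi>2 where g_repr: "degree \<phi>2 \<le> deg_bound n"
    "\<forall>h>0. g h = (\<Sum>i\<le>n. \<Sum>j\<le>n - i. \<tau>2 i j * Iint i j h)
              + (\<Sum>i\<le>n. \<Sum>j\<le>n - i. \<sigma>2 i j * Jint i j h) + poly \<phi>2 (uu h)"
    using assms(2) unfolding IJ_representable_def by blast
  show ?thesis
    unfolding IJ_representable_def
    by (intro exI[of _ "\<lambda>i j. \<tau>1 i j + \<tau>2 i j"] exI[of _ "\<lambda>i j. \<sigma>1 i j + \<sigma>2 i j"]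
        exI[of _ "\<phi>1 + \<phi>2"])
       (simp add: f_repr g_repr degree_add_le distrib_right sum.distrib)
qed

lemma IJ_representable_scale:
  assumes "IJ_representable n f"
  shows "IJ_representable n (\<lambda>h. c * f h)"
proof -
  obtain \<tau> \<sigma> \<phi> where "degree \<phi> \<le> deg_bound n"
    "\<forall>h>0. f h = (\<Sum>i\<le>n. \<Sum>j\<le>n - i. \<tau> i j * Iint i j h)
              + (\<Sum>i\<le>n. \<Sum>j\<le>n - i. \<sigma> i j * Jint i j h) + poly \<phi> (uu h)"
    using assms unfolding IJ_representable_def by blast
  then show ?thesis
    unfolding IJ_representable_def
    by (intro exI[of _ "\<lambda>i j. c * \<tau> i j"] exI[of _ "\<lambda>i j. c * \<sigma> i j"] exI[of _ "smult c \<phi>"])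
       (auto simp: distrib_left sum_distrib_left mult.assoc intro: order_trans[OF degree_smult_le])
qed

lemma IJ_representable_monomial:
  assumes "c \<noteq> 0 \<Longrightarrow> k \<le> deg_bound n"
  shows "IJ_representable n (\<lambda>h. c * uu h ^ k)"
  unfolding IJ_representable_def
  using assms
  by (intro exI[of _ "\<lambda>_ _. 0"] exI[of _ "\<lambda>_ _. 0"] exI[of _ "monom c k"])
     (cases "c = 0"; simp add: degree_monom_eq poly_monom)

lemma IJ_representable_zero: "IJ_representable n (\<lambda>h. 0)"
  using IJ_representable_monomial[of 0] by simp

lemma IJ_representable_diff:
  "IJ_representable n f \<Longrightarrow> IJ_representable n g \<Longrightarrow> IJ_representable n (\<lambda>h. f h - g h)"
  using IJ_representable_add[of n f "\<lambda>h. (-1) * g h"] IJ_representable_scale[of n g "-1"] by simp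

lemma IJ_representable_sum:
  "finite K \<Longrightarrow> (\<And>k. k \<in> K \<Longrightarrow> IJ_representable n (f k)) \<Longrightarrow> IJ_representable n (\<lambda>h. \<Sum>k\<in>K. f k h)"
  by (induction K rule: finite_induct) (simp_all add: IJ_representable_zero IJ_representable_add)

lemma sum_triangle_indicator:
  fixes F :: "nat \<Rightarrow> nat \<Rightarrow> real"
  assumes "i + j \<le> n"
  shows "(\<Sum>a\<le>n. \<Sum>b\<le>n - a. (if a = i \<and> b = j then 1 else 0) * F a b) = F i j"
proof -
  have "(\<Sum>a\<le>n. \<Sum>b\<le>n - a. (if a = i \<and> b = j then 1 else 0) * F a b)
      = (\<Sum>a\<le>n. if a = i then (\<Sum>b\<le>n - a. if b = j then F a b else 0) else 0)"
    by (intro sum.cong refl) (auto intro: sum.cong simp del: sum.delta)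
  also have "\<dots> = (\<Sum>b\<le>n - i. if b = j then F i b else 0)"
    using assms by (subst sum.delta) auto
  also have "\<dots> = F i j"
    using assms by (subst sum.delta) auto
  finally show ?thesis .
qed

lemma IJ_representable_Iint: "i + j \<le> n \<Longrightarrow> IJ_representable n (Iint i j)"
  unfolding IJ_representable_def
  by (intro exI[of _ "\<lambda>a b. if a = i \<and> b = j then 1 else 0"] exI[of _ "\<lambda>_ _. 0"] exI[of _ 0])
     (simp add: sum_triangle_indicator)

lemma IJ_representable_Jint: "i + j \<le> n \<Longrightarrow> IJ_representable n (Jint i j)"
  unfolding IJ_representable_def
  by (intro exI[of _ "\<lambda>_ _. 0"] exI[of _ "\<lambda>a b. if a = i \<and> b = j then 1 else 0"] exI[of _ 0])
     (simp add: sum_triangle_indicator)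

lemma cw_arc_int_bipoly:
  "cw_arc_int (bipoly n c) (\<lambda>x y. - bipoly n d x y) h t0 t1 =
   (\<Sum>i\<le>n. \<Sum>j\<le>n - i. c i j * cw_arc_int (\<lambda>x y. x ^ i * y ^ j) (\<lambda>_ _. 0) h t0 t1
                      - d i j * cw_arc_int (\<lambda>_ _. 0) (\<lambda>x y. x ^ i * y ^ j) h t0 t1)"
proof -
  define A where "A i j t = (sqrt h * cos t) ^ i * (sqrt h * sin t) ^ j * (- sqrt h * sin t)" for i j t
  define B where "B i j t = (sqrt h * cos t) ^ i * (sqrt h * sin t) ^ j * (sqrt h * cos t)" for i j t
  have int: "A i j integrable_on {t1..t0}" "B i j integrable_on {t1..t0}" for i j
    unfolding A_def B_def by (intro integrable_continuous_interval continuous_intros)+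
  have "cw_arc_int (bipoly n c) (\<lambda>x y. - bipoly n d x y) h t0 t1 =
      - integral {t1..t0} (\<lambda>t. \<Sum>i\<le>n. \<Sum>j\<le>n - i. c i j * A i j t - d i j * B i j t)"
    unfolding cw_arc_int_def bipoly_def A_def B_def
    by (simp only: sum_distrib_right sum_subtractf[symmetric] mult_minus_left
          diff_conv_add_uminus[symmetric] mult.assoc)
  also have "\<dots> = - (\<Sum>i\<le>n. \<Sum>j\<le>n - i. c i j * integral {t1..t0} (A i j) - d i j * integral {t1..t0} (B i j))"
    by (simp add: integral_sum integrable_sum integrable_diff integrable_on_mult_right integral_diff int)
  finally show ?thesis
    unfolding cw_arc_int_def A_def B_def by (simp add: sum_negf[symmetric] algebra_simps)
qed

lemma angA_endpoint:
  assumes "h > 0"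
  shows "sqrt h * cos (angA h) = uu h" "sqrt h * sin (angA h) = uu h ^ 2"
    and "0 \<le> angA h" "angA h \<le> pi / 2"
proof -
  define s where "s = sqrt (1 + 4 * h)"
  have "s > 1"
    using assms by (simp add: s_def real_less_rsqrt)
  then have u_pos: "uu h > 0" and u_sq: "uu h ^ 2 = (s - 1) / 2"
    by (simp_all add: uu_def s_def[symmetric])
  have "h = uu h ^ 2 * (1 + uu h ^ 2)"
    using assms unfolding u_sq s_def by (simp add: field_simps power2_eq_square)
  then have sqrt_h: "sqrt h = uu h * sqrt (1 + uu h ^ 2)"
    using u_pos by (metis real_sqrt_mult real_sqrt_abs abs_of_pos power2_eq_square)
  have "sqrt (1 + uu h ^ 2) > 0"
    by (simp add: add_pos_nonneg)
  then show "sqrt h * cos (angA h) = uu h" "sqrt h * sin (angA h) = uu h ^ 2"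
    unfolding angA_def cos_arctan sin_arctan sqrt_h by (simp_all add: power2_eq_square)
  show "0 \<le> angA h" "angA h \<le> pi / 2"
    unfolding angA_def using u_pos arctan_ubound[of "uu h"] by simp_all
qed

lemma cw_arc_int_dy_monomial:
  assumes "t1 \<le> t0"
  shows "cw_arc_int (\<lambda>_ _. 0) (\<lambda>x y. x ^ i * y ^ j) h t0 t1 =
    ((sqrt h * cos t1) ^ i * (sqrt h * sin t1) ^ (j + 1)
       - (sqrt h * cos t0) ^ i * (sqrt h * sin t0) ^ (j + 1)
       - real i * cw_arc_int (\<lambda>x y. x ^ (i - 1) * y ^ (j + 1)) (\<lambda>_ _. 0) h t0 t1) / real (j + 1)"
proof -
  define G where "G t = (sqrt h * cos t) ^ i * (sqrt h * sin t) ^ (j + 1)" for t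
  define F1 where "F1 t = (sqrt h * cos t) ^ (i - 1) * (sqrt h * sin t) ^ (j + 1) * (- sqrt h * sin t)" for t
  define F2 where "F2 t = (sqrt h * cos t) ^ i * (sqrt h * sin t) ^ j * (sqrt h * cos t)" for t
  have int: "F1 integrable_on {t1..t0}" "F2 integrable_on {t1..t0}"
    unfolding F1_def F2_def by (intro integrable_continuous_interval continuous_intros)+
  have "(G has_real_derivative (real i * F1 t + real (j + 1) * F2 t)) (at t)" for t
    unfolding G_def F1_def F2_def by (rule derivative_eq_intros refl | simp)+
  then have "((\<lambda>t. real i * F1 t + real (j + 1) * F2 t) has_integral (G t0 - G t1)) {t1..t0}"
    by (intro fundamental_theorem_of_calculus assms)
       (simp add: has_real_derivative_iff_has_vector_derivative[symmetric] has_field_derivative_at_within)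
  then have "integral {t1..t0} (\<lambda>t. real i * F1 t + real (j + 1) * F2 t) = G t0 - G t1"
    by (rule integral_unique)
  then have "real i * integral {t1..t0} F1 + real (j + 1) * integral {t1..t0} F2 = G t0 - G t1"
    using int by (simp add: integral_add integrable_on_mult_right)
  then show ?thesis
    unfolding cw_arc_int_def F1_def[symmetric] F2_def[symmetric] by (simp add: G_def field_simps)
qed

lemma cw_arc_int_shift_pi:
  "cw_arc_int P Q h (t0 + pi) (t1 + pi) =
   cw_arc_int (\<lambda>x y. - P (-x) (-y)) (\<lambda>x y. - Q (-x) (-y)) h t0 t1"
  unfolding cw_arc_int_def integral_shift_Icc_real[symmetric]
  by (simp add: o_def cos_add sin_add)

lemma bipoly_reflect:
  "- bipoly n c (-x) (-y) = bipoly n (\<lambda>i j. - ((-1) ^ (i + j) * c i j)) x y"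
  unfolding bipoly_def sum_negf[symmetric]
  by (intro sum.cong refl) (simp add: power_minus[of x] power_minus[of y] power_add)

lemma arcCD_eq_arcAB_reflect: "arcCD P Q h = arcAB (\<lambda>x y. - P (-x) (-y)) (\<lambda>x y. - Q (-x) (-y)) h"
  unfolding arcCD_def arcAB_def
  using cw_arc_int_shift_pi[of P Q h "angA h" "- angA h"] by (simp add: add.commute)

lemma arcDA_eq_arcBC_reflect: "arcDA P Q h = arcBC (\<lambda>x y. - P (-x) (-y)) (\<lambda>x y. - Q (-x) (-y)) h"
  unfolding arcDA_def arcBC_def
  using cw_arc_int_shift_pi[of P Q h "- angA h" "- pi + angA h"] by (simp add: add.commute)

lemma IJ_representable_arc_dy_monomial:
  fixes T0 T1 :: "real \<Rightarrow> real" and p q p' q' :: real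
  assumes ends: "\<And>h. h > 0 \<Longrightarrow> T1 h \<le> T0 h \<and>
      sqrt h * cos (T0 h) = p * uu h \<and> sqrt h * sin (T0 h) = q * uu h ^ 2 \<and>
      sqrt h * cos (T1 h) = p' * uu h \<and> sqrt h * sin (T1 h) = q' * uu h ^ 2"
    and deg: "p' ^ i * q' ^ (j + 1) \<noteq> p ^ i * q ^ (j + 1) \<Longrightarrow> i + 2 * j + 2 \<le> deg_bound n"
    and dx: "i > 0 \<Longrightarrow> IJ_representable n
               (\<lambda>h. cw_arc_int (\<lambda>x y. x ^ (i - 1) * y ^ (j + 1)) (\<lambda>_ _. 0) h (T0 h) (T1 h))"
  shows "IJ_representable n (\<lambda>h. cw_arc_int (\<lambda>_ _. 0) (\<lambda>x y. x ^ i * y ^ j) h (T0 h) (T1 h))"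
proof (rule IJ_representable_cong)
  define c where "c = (p' ^ i * q' ^ (j + 1) - p ^ i * q ^ (j + 1)) / real (j + 1)"
  define dx_int where
    "dx_int = (\<lambda>h. cw_arc_int (\<lambda>x y. x ^ (i - 1) * y ^ (j + 1)) (\<lambda>_ _. 0) h (T0 h) (T1 h))"
  have "IJ_representable n (\<lambda>h. c * uu h ^ (i + 2 * j + 2))"
    using deg by (intro IJ_representable_monomial) (simp add: c_def)
  moreover have "IJ_representable n (\<lambda>h. (real i / real (j + 1)) * dx_int h)"
  proof (cases "i = 0")
    case True
    then show ?thesis by (simp add: IJ_representable_zero)
  next
    case False
    then show ?thesis
      using dx unfolding dx_int_def by (intro IJ_representable_scale) simp
  qed
  ultimately show "IJ_representable n (\<lambda>h. c * uu h ^ (i + 2 * j + 2) - (real i / real (j + 1)) * dx_int h)"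
    by (rule IJ_representable_diff)
  fix h :: real
  assume "h > 0"
  then have "T1 h \<le> T0 h" and end_values:
      "sqrt h * cos (T0 h) = p * uu h" "sqrt h * sin (T0 h) = q * uu h ^ 2"
      "sqrt h * cos (T1 h) = p' * uu h" "sqrt h * sin (T1 h) = q' * uu h ^ 2"
    using ends by blast+
  have monomial_at_end: "(a * uu h) ^ i * (b * uu h ^ 2) ^ (j + 1)
      = a ^ i * b ^ (j + 1) * uu h ^ (i + 2 * j + 2)" for a b
    by (simp add: power_mult_distrib mult_ac flip: power_mult power_add)
  show "cw_arc_int (\<lambda>_ _. 0) (\<lambda>x y. x ^ i * y ^ j) h (T0 h) (T1 h)
      = c * uu h ^ (i + 2 * j + 2) - (real i / real (j + 1)) * dx_int h"
    unfolding cw_arc_int_dy_monomial[OF \<open>T1 h \<le> T0 h\<close>] end_values monomial_at_end c_def dx_int_def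
    by (simp add: diff_divide_distrib left_diff_distrib)
qed

lemma IJ_representable_arc_bipoly:
  assumes dx: "\<And>i j. i + j \<le> n \<Longrightarrow>
      IJ_representable n (\<lambda>h. cw_arc_int (\<lambda>x y. x ^ i * y ^ j) (\<lambda>_ _. 0) h (T0 h) (T1 h))"
    and dy: "\<And>i j. i + j \<le> n \<Longrightarrow>
      IJ_representable n (\<lambda>h. cw_arc_int (\<lambda>_ _. 0) (\<lambda>x y. x ^ i * y ^ j) h (T0 h) (T1 h))"
  shows "IJ_representable n (\<lambda>h. cw_arc_int (bipoly n c) (\<lambda>x y. - bipoly n d x y) h (T0 h) (T1 h))"
  unfolding cw_arc_int_bipoly
  by (intro IJ_representable_sum IJ_representable_diff IJ_representable_scale finite_atMost dx dy) auto

lemma IJ_representable_arcAB_dy_monomial: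
  assumes "i + j \<le> n"
  shows "IJ_representable n (\<lambda>h. arcAB (\<lambda>_ _. 0) (\<lambda>x y. x ^ i * y ^ j) h)"
  unfolding arcAB_def
proof (rule IJ_representable_arc_dy_monomial[where p = 1 and q = 1 and p' = 1 and q' = "-1"])
  show "- angA h \<le> angA h \<and>
      sqrt h * cos (angA h) = 1 * uu h \<and> sqrt h * sin (angA h) = 1 * uu h ^ 2 \<and>
      sqrt h * cos (- angA h) = 1 * uu h \<and> sqrt h * sin (- angA h) = - 1 * uu h ^ 2"
    if "h > 0" for h
    using angA_endpoint[OF that] by simp
  show "i + 2 * j + 2 \<le> deg_bound n" if "1 ^ i * (- 1) ^ (j + 1) \<noteq> (1::real) ^ i * 1 ^ (j + 1)"
  proof -
    have "even j"
      using that by (auto simp: minus_one_power_iff split: if_splits)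
    then show ?thesis
      using assms unfolding deg_bound_def by presburger
  qed
  show "IJ_representable n
      (\<lambda>h. cw_arc_int (\<lambda>x y. x ^ (i - 1) * y ^ (j + 1)) (\<lambda>_ _. 0) h (angA h) (- angA h))" if "i > 0"
    using IJ_representable_Iint[of "i - 1" "j + 1" n] assms that
    unfolding Iint_def arcAB_def by simp
qed

lemma IJ_representable_arcBC_dy_monomial:
  assumes "i + j \<le> n"
  shows "IJ_representable n (\<lambda>h. arcBC (\<lambda>_ _. 0) (\<lambda>x y. x ^ i * y ^ j) h)"
  unfolding arcBC_def
proof (rule IJ_representable_arc_dy_monomial[where p = 1 and q = "-1" and p' = "-1" and q' = "-1"])
  show "- pi + angA h \<le> - angA h \<and>
      sqrt h * cos (- angA h) = 1 * uu h \<and> sqrt h * sin (- angA h) = - 1 * uu h ^ 2 \<and>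
      sqrt h * cos (- pi + angA h) = - 1 * uu h \<and> sqrt h * sin (- pi + angA h) = - 1 * uu h ^ 2"
    if "h > 0" for h
    using angA_endpoint[OF that] by (simp add: cos_add sin_add)
  show "i + 2 * j + 2 \<le> deg_bound n"
    if "(- 1) ^ i * (- 1) ^ (j + 1) \<noteq> (1::real) ^ i * (- 1) ^ (j + 1)"
  proof -
    have "odd i"
      using that by (auto simp: minus_one_power_iff split: if_splits)
    then show ?thesis
      using assms unfolding deg_bound_def by presburger
  qed
  show "IJ_representable n
      (\<lambda>h. cw_arc_int (\<lambda>x y. x ^ (i - 1) * y ^ (j + 1)) (\<lambda>_ _. 0) h (- angA h) (- pi + angA h))"
    if "i > 0"
    using IJ_representable_Jint[of "i - 1" "j + 1" n] assms that
    unfolding Jint_def arcBC_def by simp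
qed

lemma IJ_representable_arcAB_bipoly:
  "IJ_representable n (\<lambda>h. arcAB (bipoly n c) (\<lambda>x y. - bipoly n d x y) h)"
  unfolding arcAB_def
  using IJ_representable_Iint[unfolded Iint_def arcAB_def]
    IJ_representable_arcAB_dy_monomial[unfolded arcAB_def]
  by (rule IJ_representable_arc_bipoly)

lemma IJ_representable_arcBC_bipoly:
  "IJ_representable n (\<lambda>h. arcBC (bipoly n c) (\<lambda>x y. - bipoly n d x y) h)"
  unfolding arcBC_def
  using IJ_representable_Jint[unfolded Jint_def arcBC_def]
    IJ_representable_arcBC_dy_monomial[unfolded arcBC_def]
  by (rule IJ_representable_arc_bipoly)

theorem lemma2p1:
  fixes n :: nat and a b :: "nat \<Rightarrow> nat \<Rightarrow> nat \<Rightarrow> real"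
  assumes "n \<ge> 1"
  shows "\<exists>(\<tau>::nat \<Rightarrow> nat \<Rightarrow> real) (\<sigma>::nat \<Rightarrow> nat \<Rightarrow> real) (\<phi>::real poly).
           real (degree \<phi>) \<le> 2 * real n + (3 + (-1) ^ n) / 2 \<and>
           (\<forall>h>0. melnikov n a b h =
                    (\<Sum>i\<le>n. \<Sum>j\<le>n - i. \<tau> i j * Iint i j h)
                  + (\<Sum>i\<le>n. \<Sum>j\<le>n - i. \<sigma> i j * Jint i j h)
                  + poly \<phi> (uu h))"
proof -
  have "IJ_representable n (melnikov n a b)"
    unfolding melnikov_def[abs_def] arcCD_eq_arcAB_reflect arcDA_eq_arcBC_reflect bipoly_reflect
    by (intro IJ_representable_add IJ_representable_arcAB_bipoly IJ_representable_arcBC_bipoly)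
  then show ?thesis
    unfolding IJ_representable_def deg_bound_real .
qed

end
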